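(* Let $2\le p<\infty$, let $g\in L^p(\mathbb R)$ with $\|g\|_p=1$, and let $\Lambda\subset\mathbb R\times\mathbb R$ be countable such that $\mathcal G(g;\Lambda)$ is a $K$-unconditional basic sequence in $L^p(\mathbb R)$. Let $\delta>0$ satisfy $\sup_{0<t<\delta}\|\tau_tg-g\|_p\le\frac12$ and put $\Lambda_k=\{(t,s)\in\Lambda:k\delta\le t<(k+1)\delta\}$. Then there are constants $c,C>0$ depending only on $p$ and $K$ such that for every $k\in\mathbb Z$ and every finitely supported family of scalars $\{a_{ts}\}_{(t,s)\in\Lambda_k}$, $$c\Big(\sum_{(t,s)\in\Lambda_k}|a_{ts}|^2\Big)^{1/2}\le\Big\|\sum_{(t,s)\in\Lambda_k}a_{ts}e_s\tau_tg\Big\|_p\le C\Big(\sum_{(t,s)\in\Lambda_k}|a_{ts}|^2\Big)^{1/2}.$$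
   Context: $(\tau_t g)(x)=g(x-t)$, $e_s(x)=e^{2\pi i s x}$, $\mathcal G(g;\Lambda)=\{e_s\tau_t g:(t,s)\in\Lambda\}$. A $K$-unconditional basic sequence $\{u_n\}$ is a basis of its closed span with $\|\sum\theta_na_nu_n\|\le K\|\sum a_nu_n\|$ for all finitely supported scalars and $|\theta_n|\le 1$. *)

theory Defs
  imports "HOL-Analysis.Analysis"
begin

definition memLp :: "real \<Rightarrow> (real \<Rightarrow> complex) \<Rightarrow> bool" where
  "memLp p f \<longleftrightarrow> f \<in> borel_measurable lebesgue \<and>
     integrable lebesgue (\<lambda>x. cmod (f x) powr p)"

definition Lp_norm :: "real \<Rightarrow> (real \<Rightarrow> complex) \<Rightarrow> real" where
  "Lp_norm p f = (\<integral>x. cmod (f x) powr p \<partial>lebesgue) powr (1 / p)"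

definition transl :: "real \<Rightarrow> (real \<Rightarrow> complex) \<Rightarrow> real \<Rightarrow> complex" where
  "transl t g = (\<lambda>x. g (x - t))"

definition modul :: "real \<Rightarrow> real \<Rightarrow> complex" where
  "modul s = (\<lambda>x. exp (2 * pi * \<i> * complex_of_real (s * x)))"

definition gabor_atom :: "(real \<Rightarrow> complex) \<Rightarrow> real \<times> real \<Rightarrow> real \<Rightarrow> complex" where
  "gabor_atom g ts = (\<lambda>x. modul (snd ts) x * transl (fst ts) g x)"

definition in_closed_span :: "real \<Rightarrow> ('i \<Rightarrow> real \<Rightarrow> complex) \<Rightarrow> 'i set \<Rightarrow> (real \<Rightarrow> complex) \<Rightarrow> bool" where
  "in_closed_span p u I f \<longleftrightarrow> memLp p f \<and>
     (\<forall>\<epsilon>>0. \<exists>F a. finite F \<and> F \<subseteq> I \<and>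
        Lp_norm p (\<lambda>x. f x - (\<Sum>i\<in>F. a i * u i x)) < \<epsilon>)"

definition basic_sequence :: "real \<Rightarrow> ('i \<Rightarrow> real \<Rightarrow> complex) \<Rightarrow> 'i set \<Rightarrow> bool" where
  "basic_sequence p u I \<longleftrightarrow> (\<forall>i\<in>I. memLp p (u i)) \<and>
     (\<exists>\<nu>. let J = (if finite I then {..<card I} else UNIV) in
        bij_betw \<nu> J I \<and>
        (\<forall>f. in_closed_span p u I f \<longrightarrow>
           (\<exists>!a::nat \<Rightarrow> complex. (\<forall>n. n \<notin> J \<longrightarrow> a n = 0) \<and>
              (\<lambda>N. Lp_norm p (\<lambda>x. f x - (\<Sum>n\<in>J \<inter> {..<N}. a n * u (\<nu> n) x)))
                \<longlonglongrightarrow> 0)))"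

definition K_unconditional_basic :: "real \<Rightarrow> real \<Rightarrow> ('i \<Rightarrow> real \<Rightarrow> complex) \<Rightarrow> 'i set \<Rightarrow> bool" where
  "K_unconditional_basic p K u I \<longleftrightarrow> basic_sequence p u I \<and>
     (\<forall>F a \<theta>. finite F \<and> F \<subseteq> I \<and> (\<forall>i. cmod (\<theta> i) \<le> 1) \<longrightarrow>
        Lp_norm p (\<lambda>x. \<Sum>i\<in>F. \<theta> i * a i * u i x)
          \<le> K * Lp_norm p (\<lambda>x. \<Sum>i\<in>F. a i * u i x))"

end

theory Submission
  imports Defs
begin

text \<open>
  Write \<open>F = \<Sum> a\<^sub>t\<^sub>s e\<^sub>s \<tau>\<^sub>t g\<close> and, for a choice of signs \<open>\<epsilon>\<close>,
  \<open>F\<^sub>\<epsilon> = \<Sum> \<epsilon>\<^sub>t\<^sub>s a\<^sub>t\<^sub>s e\<^sub>s \<tau>\<^sub>t g\<close>. By unconditionality every \<open>\<parallel>F\<^sub>\<epsilon>\<parallel>\<^sub>p\<close> lies between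
  \<open>\<parallel>F\<parallel>\<^sub>p / K\<close> and \<open>K \<parallel>F\<parallel>\<^sub>p\<close>, so \<open>\<parallel>F\<parallel>\<^sub>p\<^sup>p\<close> is comparable to the average of \<open>\<parallel>F\<^sub>\<epsilon>\<parallel>\<^sub>p\<^sup>p\<close>
  over all signs. Integrating Khintchine's inequality pointwise, and using that modulations have
  modulus one, this average is comparable to the integral of the \<open>p\<close>-th power of the square
  function \<open>(\<Sum> \<bar>a\<^sub>t\<^sub>s\<bar>\<^sup>2 \<bar>g (x - t)\<bar>\<^sup>2)\<^sup>1\<^sup>/\<^sup>2\<close>. Jensen's inequality bounds that integral
  above by \<open>(\<Sum> \<bar>a\<^sub>t\<^sub>s\<bar>\<^sup>2)\<^sup>p\<^sup>/\<^sup>2\<close>. For the lower bound, all \<open>t\<close> lie in one window of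
  length \<open>\<delta>\<close>, so every \<open>\<tau>\<^sub>t g\<close> is within \<open>1/2\<close> of \<open>\<tau>\<^sub>t\<^sub>0 g\<close> in \<open>L\<^sup>p\<close>;
  comparing the square function with \<open>(\<Sum> \<bar>a\<^sub>t\<^sub>s\<bar>\<^sup>2)\<^sup>1\<^sup>/\<^sup>2 \<bar>g (x - t\<^sub>0)\<bar>\<close> bounds the
  integral below by \<open>2\<^sup>-\<^sup>p (\<Sum> \<bar>a\<^sub>t\<^sub>s\<bar>\<^sup>2)\<^sup>p\<^sup>/\<^sup>2\<close>.
\<close>

section \<open>Rademacher averages\<close>

definition sign_vectors :: "'a set \<Rightarrow> ('a \<Rightarrow> real) set" where
  "sign_vectors S = S \<rightarrow>\<^sub>E {-1, 1}"

definition sign_average :: "'a set \<Rightarrow> (('a \<Rightarrow> real) \<Rightarrow> real) \<Rightarrow> real" where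
  "sign_average S f = (\<Sum>e\<in>sign_vectors S. f e) / 2 ^ card S"

definition signed_sum :: "'a set \<Rightarrow> ('a \<Rightarrow> 'b::real_vector) \<Rightarrow> ('a \<Rightarrow> real) \<Rightarrow> 'b" where
  "signed_sum S c e = (\<Sum>i\<in>S. e i *\<^sub>R c i)"

lemma finite_sign_vectors: "finite S \<Longrightarrow> finite (sign_vectors S)"
  by (simp add: sign_vectors_def finite_PiE)

lemma card_sign_vectors: "finite S \<Longrightarrow> card (sign_vectors S) = 2 ^ card S"
  by (simp add: sign_vectors_def card_PiE numeral_2_eq_2)

lemma sign_vectors_nonempty: "sign_vectors S \<noteq> {}"
  by (simp add: sign_vectors_def PiE_eq_empty_iff)

lemma sign_vector_values: "e \<in> sign_vectors S \<Longrightarrow> i \<in> S \<Longrightarrow> e i = 1 \<or> e i = -1"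
  by (auto simp: sign_vectors_def PiE_iff)

lemma sign_average_insert:
  assumes "finite S" "x \<notin> S"
  shows "sign_average (insert x S) f = sign_average S (\<lambda>e. (f (e(x := 1)) + f (e(x := -1))) / 2)"
proof -
  have "(\<Sum>e\<in>sign_vectors (insert x S). f e) = (\<Sum>(y, e)\<in>{-1, 1} \<times> sign_vectors S. f (e(x := y)))"
    unfolding sign_vectors_def PiE_insert_eq
    using sum.reindex[OF inj_combinator[OF assms(2), of "\<lambda>_. {-1::real, 1}"], of f]
    by (simp add: o_def case_prod_unfold)
  also have "\<dots> = (\<Sum>e\<in>sign_vectors S. f (e(x := 1)) + f (e(x := -1)))"
    by (simp add: sum.cartesian_product[symmetric] sum.distrib)
  finally show ?thesis
    using assms unfolding sign_average_def by (simp add: sum_divide_distrib[symmetric])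
qed

lemma sign_average_const: "finite S \<Longrightarrow> sign_average S (\<lambda>_. c) = c"
  by (simp add: sign_average_def card_sign_vectors)

lemma sign_average_mono:
  "(\<And>e. e \<in> sign_vectors S \<Longrightarrow> f e \<le> g e) \<Longrightarrow> sign_average S f \<le> sign_average S g"
  unfolding sign_average_def by (intro divide_right_mono sum_mono) auto

lemma sign_average_add: "sign_average S (\<lambda>e. f e + g e) = sign_average S f + sign_average S g"
  unfolding sign_average_def by (simp add: sum.distrib add_divide_distrib)

lemma sign_average_mult_left: "sign_average S (\<lambda>e. c * f e) = c * sign_average S f"
  unfolding sign_average_def by (simp add: sum_distrib_left)

lemma sign_average_nonneg: "(\<And>e. e \<in> sign_vectors S \<Longrightarrow> 0 \<le> f e) \<Longrightarrow> 0 \<le> sign_average S f"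
  unfolding sign_average_def by (intro divide_nonneg_pos sum_nonneg) auto

lemma sign_average_convex_le:
  assumes "finite S" "convex_on {0..} \<phi>" "\<And>e. 0 \<le> X e"
  shows "\<phi> (sign_average S X) \<le> sign_average S (\<lambda>e. \<phi> (X e))"
proof -
  have "(\<Sum>e\<in>sign_vectors S. 1 / 2 ^ card S) = (1::real)"
    using assms(1) by (simp add: card_sign_vectors)
  then have "\<phi> (\<Sum>e\<in>sign_vectors S. (1 / 2 ^ card S) *\<^sub>R X e) \<le> (\<Sum>e\<in>sign_vectors S. (1 / 2 ^ card S) * \<phi> (X e))"
    using assms by (intro convex_on_sum finite_sign_vectors sign_vectors_nonempty) auto
  then show ?thesis
    unfolding sign_average_def by (simp add: sum_divide_distrib)
qed

lemma signed_sum_upd_insert: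
  assumes "finite S" "x \<notin> S"
  shows "signed_sum (insert x S) c (e(x := y)) = y *\<^sub>R c x + signed_sum S c e"
proof -
  have "signed_sum S c (e(x := y)) = signed_sum S c e"
    unfolding signed_sum_def using assms(2) by (intro sum.cong) auto
  then show ?thesis using assms unfolding signed_sum_def by simp
qed

lemma sign_average_norm_signed_sum_square:
  fixes c :: "'a \<Rightarrow> 'b::real_inner"
  assumes "finite S"
  shows "sign_average S (\<lambda>e. (norm (signed_sum S c e))\<^sup>2) = (\<Sum>i\<in>S. (norm (c i))\<^sup>2)"
  using assms
proof (induction S rule: finite_induct)
  case empty
  then show ?case by (simp add: sign_average_def sign_vectors_def signed_sum_def)
next
  case (insert x S)
  have parallelogram: "((norm (a + b))\<^sup>2 + (norm (b - a))\<^sup>2) / 2 = (norm b)\<^sup>2 + (norm a)\<^sup>2" for a b :: 'b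
    by (simp add: power2_norm_eq_inner algebra_simps inner_commute)
  have "sign_average (insert x S) (\<lambda>e. (norm (signed_sum (insert x S) c e))\<^sup>2)
      = sign_average S (\<lambda>e. (norm (signed_sum S c e))\<^sup>2 + (norm (c x))\<^sup>2)"
    using insert.hyps by (simp add: sign_average_insert signed_sum_upd_insert parallelogram)
  then show ?case
    using insert by (simp add: sign_average_add sign_average_const)
qed

section \<open>Khintchine's inequality\<close>

lemma convex_on_powr_nonneg:
  assumes "1 \<le> q"
  shows "convex_on {0..} (\<lambda>x::real. x powr q)"
proof (rule convex_onI)
  fix t x y :: real
  assume t: "0 < t" "t < 1" and x: "x \<in> {0..}" and y: "y \<in> {0..}"
  have scaled: "(s * z) powr q \<le> s * z powr q" if "0 \<le> s" "s \<le> 1" "0 \<le> z" for s z :: real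
  proof -
    have "s powr q \<le> s"
      using that assms by (cases "s = 0") (auto intro: powr_le_one_le)
    then show ?thesis
      using that by (simp add: powr_mult mult_right_mono)
  qed
  show "((1 - t) *\<^sub>R x + t *\<^sub>R y) powr q \<le> (1 - t) * x powr q + t * y powr q"
  proof (cases "x = 0 \<or> y = 0")
    case False
    then show ?thesis using convex_onD[OF powr_convex[OF assms], of t x y] t x y by simp
  next
    case True
    then show ?thesis using scaled[of t y] scaled[of "1 - t" x] t x y assms by auto
  qed
qed simp

lemma add_powr_le_two_powr:
  fixes u v p :: real
  assumes "0 \<le> u" "0 \<le> v" "1 \<le> p"
  shows "(u + v) powr p \<le> 2 powr (p - 1) * (u powr p + v powr p)"
proof -
  have "((u + v) / 2) powr p \<le> (u powr p + v powr p) / 2"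
    using convex_onD[OF convex_on_powr_nonneg[OF assms(3)], of "1/2" u v] assms
    by (simp add: field_simps)
  then show ?thesis
    using assms by (simp add: powr_divide powr_diff field_simps)
qed

lemma L2_set_powr: "L2_set f S powr p = (\<Sum>i\<in>S. (f i)\<^sup>2) powr (p / 2)"
  unfolding L2_set_def by (simp add: powr_half_sqrt[symmetric] sum_nonneg powr_powr)

lemma square_powr_half: "0 \<le> (x::real) \<Longrightarrow> (x\<^sup>2) powr (p / 2) = x powr p"
  by (cases "x = 0") (simp_all add: powr_powr flip: powr_numeral)

lemma powr_le_imp_le_base:
  fixes x y p :: real
  assumes "x powr p \<le> y powr p" "0 < p" "0 \<le> x" "0 \<le> y"
  shows "x \<le> y"
  using assms powr_less_mono2[of p y x] by (meson not_le)

lemma Khintchine_lower: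
  fixes c :: "'a \<Rightarrow> 'b::real_inner"
  assumes "finite S" "2 \<le> p"
  shows "L2_set (\<lambda>i. norm (c i)) S powr p \<le> sign_average S (\<lambda>e. norm (signed_sum S c e) powr p)"
proof -
  have "L2_set (\<lambda>i. norm (c i)) S powr p = (sign_average S (\<lambda>e. (norm (signed_sum S c e))\<^sup>2)) powr (p / 2)"
    using assms(1) by (simp add: L2_set_powr sign_average_norm_signed_sum_square)
  also have "\<dots> \<le> sign_average S (\<lambda>e. ((norm (signed_sum S c e))\<^sup>2) powr (p / 2))"
    using assms by (intro sign_average_convex_le convex_on_powr_nonneg) auto
  finally show ?thesis by (simp add: square_powr_half)
qed

lemma two_power_mult_fact_le_fact_double: "2 ^ k * fact k \<le> (fact (2 * k) :: real)"
proof (induction k)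
  case (Suc k)
  have "(2 * of_nat (Suc k)) * (2 ^ k * fact k) \<le> (of_nat (2 * k + 2) * of_nat (2 * k + 1)) * (fact (2 * k) :: real)"
    using Suc by (intro mult_mono) auto
  then show ?case by (simp add: fact_Suc algebra_simps)
qed simp

lemma cosh_le_exp_square_half: "cosh (x::real) \<le> exp (x\<^sup>2 / 2)"
proof (rule sums_le[OF _ cosh_converges])
  show "(\<lambda>n. if even n then (x\<^sup>2 / 2) ^ (n div 2) /\<^sub>R fact (n div 2) else 0) sums exp (x\<^sup>2 / 2)"
    using sums_if[OF sums_zero exp_converges[of "x\<^sup>2 / 2"]] by simp
  fix n :: nat
  show "(if even n then x ^ n /\<^sub>R fact n else 0)
      \<le> (if even n then (x\<^sup>2 / 2) ^ (n div 2) /\<^sub>R fact (n div 2) else 0)"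
  proof (cases "even n")
    case True
    then obtain k where n: "n = 2 * k" by (rule evenE)
    have "(x\<^sup>2) ^ k / fact (2 * k) \<le> (x\<^sup>2) ^ k / (2 ^ k * fact k)"
      by (intro divide_left_mono two_power_mult_fact_le_fact_double) auto
    moreover have "(x\<^sup>2) ^ k = (x ^ k)\<^sup>2"
      by (metis power_mult mult.commute)
    ultimately show ?thesis
      using True by (simp add: n power_mult power_divide field_simps)
  qed simp
qed

lemma sign_average_exp_signed_sum_le:
  fixes d :: "'a \<Rightarrow> real"
  assumes "finite S"
  shows "sign_average S (\<lambda>e. exp (signed_sum S d e)) \<le> exp ((\<Sum>i\<in>S. (d i)\<^sup>2) / 2)"
  using assms
proof (induction S rule: finite_induct)
  case empty
  then show ?case by (simp add: sign_average_def sign_vectors_def signed_sum_def)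
next
  case (insert x S)
  have "(exp (d x + s) + exp (s - d x)) / 2 = cosh (d x) * exp s" for s
    by (simp add: cosh_def exp_add exp_diff exp_minus field_simps)
  then have "sign_average (insert x S) (\<lambda>e. exp (signed_sum (insert x S) d e))
      = sign_average S (\<lambda>e. cosh (d x) * exp (signed_sum S d e))"
    using insert.hyps by (simp add: sign_average_insert signed_sum_upd_insert)
  also have "\<dots> \<le> exp ((d x)\<^sup>2 / 2) * exp ((\<Sum>i\<in>S. (d i)\<^sup>2) / 2)"
    unfolding sign_average_mult_left
    by (intro mult_mono cosh_le_exp_square_half insert.IH sign_average_nonneg) (auto simp: cosh_def)
  finally show ?case
    using insert.hyps by (simp add: exp_add[symmetric] add_divide_distrib)
qed

lemma sign_average_exp_abs_signed_sum_le:
  fixes d :: "'a \<Rightarrow> real"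
  assumes "finite S"
  shows "sign_average S (\<lambda>e. exp \<bar>signed_sum S d e\<bar>) \<le> 2 * exp ((\<Sum>i\<in>S. (d i)\<^sup>2) / 2)"
proof -
  have "exp \<bar>signed_sum S d e\<bar> \<le> exp (signed_sum S d e) + exp (signed_sum S (\<lambda>i. - d i) e)" for e
    by (simp add: signed_sum_def sum_negf abs_if)
  then have "sign_average S (\<lambda>e. exp \<bar>signed_sum S d e\<bar>)
      \<le> sign_average S (\<lambda>e. exp (signed_sum S d e)) + sign_average S (\<lambda>e. exp (signed_sum S (\<lambda>i. - d i) e))"
    unfolding sign_average_add[symmetric] by (intro sign_average_mono)
  also have "\<dots> \<le> 2 * exp ((\<Sum>i\<in>S. (d i)\<^sup>2) / 2)"
    using sign_average_exp_signed_sum_le[OF assms, of d] sign_average_exp_signed_sum_le[OF assms, of "\<lambda>i. - d i"]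
    by simp
  finally show ?thesis .
qed

lemma sign_average_exp_norm_signed_sum_le:
  fixes c :: "'a \<Rightarrow> complex"
  assumes "finite S"
  shows "sign_average S (\<lambda>e. exp (cmod (signed_sum S c e))) \<le> 2 * exp (2 * (\<Sum>i\<in>S. (cmod (c i))\<^sup>2))"
proof -
  define Q where "Q = (\<Sum>i\<in>S. (cmod (c i))\<^sup>2)"
  have Re: "2 * Re (signed_sum S c e) = signed_sum S (\<lambda>i. 2 * Re (c i)) e"
    and Im: "2 * Im (signed_sum S c e) = signed_sum S (\<lambda>i. 2 * Im (c i)) e" for e
    by (simp_all add: signed_sum_def sum_distrib_left algebra_simps)
  have "exp (cmod z) \<le> 1 / 2 * (exp \<bar>2 * Re z\<bar> + exp \<bar>2 * Im z\<bar>)" for z :: complex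
  proof -
    \<comment> \<open>\<open>e\<^sup>a e\<^sup>b \<le> (e\<^sup>2\<^sup>a + e\<^sup>2\<^sup>b) / 2\<close> is AM-GM\<close>
    have "exp (\<bar>Re z\<bar> + \<bar>Im z\<bar>) \<le> 1 / 2 * (exp \<bar>2 * Re z\<bar> + exp \<bar>2 * Im z\<bar>)"
      using sum_squares_ge_zero[of "exp \<bar>Re z\<bar> - exp \<bar>Im z\<bar>" 0]
      by (simp add: exp_add abs_mult power2_eq_square algebra_simps flip: exp_add)
    then show ?thesis using cmod_le[of z] by (meson exp_le_cancel_iff order.trans)
  qed
  then have "sign_average S (\<lambda>e. exp (cmod (signed_sum S c e)))
      \<le> 1 / 2 * (sign_average S (\<lambda>e. exp \<bar>signed_sum S (\<lambda>i. 2 * Re (c i)) e\<bar>)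
         + sign_average S (\<lambda>e. exp \<bar>signed_sum S (\<lambda>i. 2 * Im (c i)) e\<bar>))"
    unfolding Re Im sign_average_add[symmetric] sign_average_mult_left[symmetric]
    by (intro sign_average_mono) (simp only: Re[symmetric] Im[symmetric])
  also have "\<dots> \<le> 1 / 2 * (2 * exp (2 * Q) + 2 * exp (2 * Q))"
  proof -
    have "(\<Sum>i\<in>S. (2 * Re (c i))\<^sup>2) / 2 \<le> 2 * Q" "(\<Sum>i\<in>S. (2 * Im (c i))\<^sup>2) / 2 \<le> 2 * Q"
      unfolding Q_def sum_divide_distrib sum_distrib_left
      by (auto intro!: sum_mono simp: cmod_power2 power_mult_distrib)
    then have "sign_average S (\<lambda>e. exp \<bar>signed_sum S (\<lambda>i. 2 * Re (c i)) e\<bar>) \<le> 2 * exp (2 * Q)"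
      "sign_average S (\<lambda>e. exp \<bar>signed_sum S (\<lambda>i. 2 * Im (c i)) e\<bar>) \<le> 2 * exp (2 * Q)"
      by (auto intro: order.trans[OF sign_average_exp_abs_signed_sum_le[OF assms]])
    then show ?thesis by simp
  qed
  finally show ?thesis unfolding Q_def by simp
qed

lemma powr_le_one_plus_fact_mult_exp:
  fixes z p :: real
  assumes "0 \<le> z" "0 < p"
  shows "z powr p \<le> 1 + fact (nat \<lceil>p\<rceil>) * exp z"
proof (cases "z \<le> 1")
  case True
  then have "z powr p \<le> 1" using assms by (intro powr_le1) auto
  then show ?thesis by (simp add: add_increasing2)
next
  case False
  have "z ^ nat \<lceil>p\<rceil> / fact (nat \<lceil>p\<rceil>) \<le> exp z"
    using sum_le_suminf[OF sums_summable[OF exp_converges[of z]], of "{nat \<lceil>p\<rceil>}"]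
      exp_converges[of z] assms
    by (simp add: sums_iff divide_inverse mult.commute)
  moreover have "z powr p \<le> z ^ nat \<lceil>p\<rceil>"
    using False powr_mono[of p "nat \<lceil>p\<rceil>" z] by (simp add: powr_realpow real_nat_ceiling_ge)
  ultimately show ?thesis by (simp add: divide_le_eq mult.commute)
qed

text \<open>Any constant would do; this one comes from \<open>z\<^sup>p \<le> 1 + \<lceil>p\<rceil>! e\<^sup>z\<close> and the bound \<open>2 e\<^sup>2\<close> for the
  Rademacher average of \<open>e\<^sup>|\<^sup>\<Sum>\<^sup>|\<close> with normalised coefficients.\<close>

definition khintchine_const :: "real \<Rightarrow> real" where
  "khintchine_const p = 1 + 2 * exp 2 * fact (nat \<lceil>p\<rceil>)"

lemma khintchine_const_pos: "0 < khintchine_const p"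
  unfolding khintchine_const_def by (intro add_pos_nonneg) auto

lemma Khintchine_upper:
  fixes c :: "'a \<Rightarrow> complex"
  assumes "finite S" "0 < p"
  shows "sign_average S (\<lambda>e. cmod (signed_sum S c e) powr p) \<le> khintchine_const p * L2_set (\<lambda>i. cmod (c i)) S powr p"
proof (cases "L2_set (\<lambda>i. cmod (c i)) S = 0")
  case True
  then have "signed_sum S c e = 0" for e
    using assms(1) by (simp add: L2_set_eq_0_iff signed_sum_def)
  then show ?thesis using True assms(1) by (simp add: sign_average_const)
next
  case False
  define \<sigma> where "\<sigma> = L2_set (\<lambda>i. cmod (c i)) S"
  have \<sigma>: "0 < \<sigma>" using False by (simp add: \<sigma>_def order_less_le)
  define c' where "c' = (\<lambda>i. c i / of_real \<sigma>)"
  have normalized: "(\<Sum>i\<in>S. (cmod (c' i))\<^sup>2) = 1"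
    using \<sigma> unfolding c'_def \<sigma>_def L2_set_def
    by (simp add: norm_divide power_divide sum_nonneg flip: sum_divide_distrib)
  have "cmod (signed_sum S c e) powr p \<le> \<sigma> powr p * (1 + fact (nat \<lceil>p\<rceil>) * exp (cmod (signed_sum S c' e)))"
    for e
  proof -
    have "signed_sum S c e = of_real \<sigma> * signed_sum S c' e"
      using \<sigma> by (simp add: signed_sum_def c'_def sum_distrib_left)
    then show ?thesis
      using \<sigma> assms(2) by (simp add: norm_mult powr_mult powr_le_one_plus_fact_mult_exp)
  qed
  then have "sign_average S (\<lambda>e. cmod (signed_sum S c e) powr p)
      \<le> sign_average S (\<lambda>e. \<sigma> powr p * (1 + fact (nat \<lceil>p\<rceil>) * exp (cmod (signed_sum S c' e))))"
    by (intro sign_average_mono)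
  also have "\<dots> = \<sigma> powr p * (1 + fact (nat \<lceil>p\<rceil>) * sign_average S (\<lambda>e. exp (cmod (signed_sum S c' e))))"
    by (simp only: sign_average_mult_left sign_average_add sign_average_const[OF assms(1)])
  also have "\<dots> \<le> \<sigma> powr p * (1 + fact (nat \<lceil>p\<rceil>) * (2 * exp 2))"
    using sign_average_exp_norm_signed_sum_le[OF assms(1), of c'] normalized
    by (intro mult_left_mono add_left_mono) auto
  finally show ?thesis
    unfolding \<sigma>_def khintchine_const_def by (simp add: algebra_simps)
qed

lemma Lp_norm_nonneg: "0 \<le> Lp_norm p f"
  unfolding Lp_norm_def by simp

lemma Lp_norm_powr: "0 < p \<Longrightarrow> Lp_norm p f powr p = (\<integral>x. cmod (f x) powr p \<partial>lebesgue)"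
  unfolding Lp_norm_def by (simp add: powr_powr integral_nonneg_AE)

lemma memLp_add:
  assumes "0 < p" "memLp p f" "memLp p g"
  shows "memLp p (\<lambda>x. f x + g x)"
proof -
  have [measurable]: "f \<in> borel_measurable lebesgue" "g \<in> borel_measurable lebesgue"
    using assms by (auto simp: memLp_def)
  have pointwise: "cmod (a + b) powr p \<le> 2 powr p * (cmod a powr p + cmod b powr p)" for a b :: complex
  proof -
    have "cmod (a + b) powr p \<le> (2 * max (cmod a) (cmod b)) powr p"
      using assms(1) norm_triangle_ineq[of a b] by (intro powr_mono2) auto
    also have "\<dots> = 2 powr p * max (cmod a) (cmod b) powr p"
      by (simp add: powr_mult)
    also have "\<dots> \<le> 2 powr p * (cmod a powr p + cmod b powr p)"
      by (intro mult_left_mono) (auto simp: max_def)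
    finally show ?thesis .
  qed
  have "integrable lebesgue (\<lambda>x. cmod (f x + g x) powr p)"
  proof (rule Bochner_Integration.integrable_bound)
    show "integrable lebesgue (\<lambda>x. 2 powr p * (cmod (f x) powr p + cmod (g x) powr p))"
      using assms(2,3) by (auto simp: memLp_def)
    show "(\<lambda>x. cmod (f x + g x) powr p) \<in> borel_measurable lebesgue"
      by measurable
    show "AE x in lebesgue. norm (cmod (f x + g x) powr p)
        \<le> norm (2 powr p * (cmod (f x) powr p + cmod (g x) powr p))"
      using pointwise by (auto intro!: AE_I2)
  qed
  then show ?thesis unfolding memLp_def by auto
qed

lemma memLp_mult_left:
  assumes "memLp p f"
  shows "memLp p (\<lambda>x. c * f x)"
proof -
  have [measurable]: "f \<in> borel_measurable lebesgue" and "integrable lebesgue (\<lambda>x. cmod (f x) powr p)"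
    using assms by (auto simp: memLp_def)
  then have "integrable lebesgue (\<lambda>x. cmod c powr p * cmod (f x) powr p)"
    by simp
  then show ?thesis
    unfolding memLp_def by (simp add: norm_mult powr_mult)
qed

lemma memLp_sum:
  assumes "0 < p" "\<And>i. i \<in> F \<Longrightarrow> memLp p (f i)"
  shows "memLp p (\<lambda>x. \<Sum>i\<in>F. f i x)"
  using assms(2)
proof (induction F rule: infinite_finite_induct)
  case (insert i F)
  then show ?case using memLp_add[OF assms(1)] by simp
qed (simp_all add: memLp_def)

lemma memLp_diff: "0 < p \<Longrightarrow> memLp p f \<Longrightarrow> memLp p g \<Longrightarrow> memLp p (\<lambda>x. f x - g x)"
  using memLp_add[of p f "\<lambda>x. - 1 * g x"] memLp_mult_left[of p g "- 1"] by simp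

lemma memLp_signed_sum:
  "0 < p \<Longrightarrow> (\<And>i. i \<in> S \<Longrightarrow> memLp p (f i)) \<Longrightarrow> memLp p (\<lambda>x. signed_sum S (\<lambda>i. f i x) e)"
  unfolding signed_sum_def scaleR_conv_of_real by (intro memLp_sum memLp_mult_left)

lemma lebesgue_integral_translate:
  fixes f :: "real \<Rightarrow> real"
  shows "(\<integral>x. f (x - t) \<partial>lebesgue) = (\<integral>x. f x \<partial>lebesgue)"
  using lebesgue_integral_real_affine[of 1 f "-t"] by simp

lemma memLp_translate:
  assumes "memLp p g"
  shows "memLp p (\<lambda>x. g (x - t))"
proof -
  have "(\<lambda>x. x - t) \<in> lebesgue \<rightarrow>\<^sub>M lebesgue"
    using lebesgue_affine_measurable[where c = "\<lambda>x::real. 1" and t = "- t"] by simp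
  then have "(\<lambda>x. g (x - t)) \<in> borel_measurable lebesgue"
    using assms measurable_compose unfolding memLp_def by blast
  moreover have "integrable lebesgue (\<lambda>x. cmod (g (x - t)) powr p)"
    using assms lebesgue_integrable_real_affine_iff[of 1 "\<lambda>x. cmod (g x) powr p" "- t"]
    by (simp add: memLp_def)
  ultimately show ?thesis unfolding memLp_def by blast
qed

lemma Lp_Khintchine:
  fixes f :: "'i \<Rightarrow> real \<Rightarrow> complex"
  assumes p: "2 \<le> p" and S: "finite S" and f: "\<And>i. i \<in> S \<Longrightarrow> memLp p (f i)"
  shows "integrable lebesgue (\<lambda>x. L2_set (\<lambda>i. cmod (f i x)) S powr p)"
    and "(\<integral>x. L2_set (\<lambda>i. cmod (f i x)) S powr p \<partial>lebesgue)
           \<le> sign_average S (\<lambda>e. Lp_norm p (\<lambda>x. signed_sum S (\<lambda>i. f i x) e) powr p)"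
    and "sign_average S (\<lambda>e. Lp_norm p (\<lambda>x. signed_sum S (\<lambda>i. f i x) e) powr p)
           \<le> khintchine_const p * (\<integral>x. L2_set (\<lambda>i. cmod (f i x)) S powr p \<partial>lebesgue)"
proof -
  define SF where "SF x = L2_set (\<lambda>i. cmod (f i x)) S powr p" for x
  define F where "F e x = cmod (signed_sum S (\<lambda>i. f i x) e) powr p" for e x
  have F_int: "integrable lebesgue (F e)" for e
    using memLp_signed_sum[of p S f e] p f unfolding F_def memLp_def by auto
  then have F_avg: "integrable lebesgue (\<lambda>x. sign_average S (\<lambda>e. F e x))"
    unfolding sign_average_def by auto
  have "Lp_norm p (\<lambda>x. signed_sum S (\<lambda>i. f i x) e) powr p = (\<integral>x. F e x \<partial>lebesgue)" for e
    using p by (simp add: Lp_norm_powr F_def)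
  then have avg_eq: "sign_average S (\<lambda>e. Lp_norm p (\<lambda>x. signed_sum S (\<lambda>i. f i x) e) powr p)
      = (\<integral>x. sign_average S (\<lambda>e. F e x) \<partial>lebesgue)"
    using F_int by (simp add: sign_average_def integral_sum)
  have lower: "SF x \<le> sign_average S (\<lambda>e. F e x)" for x
    unfolding SF_def F_def by (rule Khintchine_lower[OF S p])
  have upper: "sign_average S (\<lambda>e. F e x) \<le> khintchine_const p * SF x" for x
    unfolding SF_def F_def using p by (intro Khintchine_upper[OF S]) auto
  have "(\<lambda>x. cmod (f i x)) \<in> borel_measurable lebesgue" if "i \<in> S" for i
    using f[OF that] by (auto simp: memLp_def)
  then have "SF \<in> borel_measurable lebesgue"
    unfolding SF_def L2_set_def
    by (intro powr_real_measurable borel_measurable_sqrt borel_measurable_sum borel_measurable_power) auto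
  then show SF_int: "integrable lebesgue SF"
    using lower by (intro Bochner_Integration.integrable_bound[OF F_avg] AE_I2)
      (auto simp: SF_def intro: order.trans[OF _ abs_ge_self])
  show "(\<integral>x. SF x \<partial>lebesgue) \<le> sign_average S (\<lambda>e. Lp_norm p (\<lambda>x. signed_sum S (\<lambda>i. f i x) e) powr p)"
    unfolding avg_eq by (intro integral_mono SF_int F_avg lower)
  show "sign_average S (\<lambda>e. Lp_norm p (\<lambda>x. signed_sum S (\<lambda>i. f i x) e) powr p)
      \<le> khintchine_const p * (\<integral>x. SF x \<partial>lebesgue)"
    unfolding avg_eq using integral_mono[OF F_avg _ upper] SF_int by simp
qed

section \<open>Square functions of translates\<close>

lemma L2_set_mult_powr_le:
  fixes w y :: "'i \<Rightarrow> real"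
  assumes p: "2 \<le> p" and S: "finite S" and y: "\<And>i. 0 \<le> y i"
  shows "L2_set (\<lambda>i. w i * y i) S powr p \<le> L2_set w S powr (p - 2) * (\<Sum>i\<in>S. (w i)\<^sup>2 * y i powr p)"
proof (cases "L2_set w S = 0")
  case True
  then show ?thesis using S by (simp add: L2_set_eq_0_iff L2_set_0')
next
  case False
  define W where "W = L2_set w S"
  have W: "0 < W" "S \<noteq> {}" using False by (auto simp: W_def order_less_le)
  have weights: "(\<Sum>i\<in>S. (w i)\<^sup>2 / W\<^sup>2) = 1"
    using W by (simp add: W_def L2_set_def sum_nonneg flip: sum_divide_distrib)
  have "(\<Sum>i\<in>S. (w i * y i)\<^sup>2) = W\<^sup>2 * (\<Sum>i\<in>S. ((w i)\<^sup>2 / W\<^sup>2) *\<^sub>R (y i)\<^sup>2)"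
    using W by (simp add: sum_distrib_left power_mult_distrib)
  then have "L2_set (\<lambda>i. w i * y i) S powr p = W powr p * (\<Sum>i\<in>S. ((w i)\<^sup>2 / W\<^sup>2) *\<^sub>R (y i)\<^sup>2) powr (p / 2)"
    using W unfolding L2_set_powr by (simp add: powr_mult sum_nonneg square_powr_half)
  \<comment> \<open>Jensen for the convex function \<open>z \<mapsto> z powr (p/2)\<close> and the weights \<open>w\<^sub>i\<^sup>2 / W\<^sup>2\<close>\<close>
  also have "\<dots> \<le> W powr p * (\<Sum>i\<in>S. ((w i)\<^sup>2 / W\<^sup>2) * ((y i)\<^sup>2) powr (p / 2))"
    using p W y by (intro mult_left_mono convex_on_sum[OF S _ convex_on_powr_nonneg weights]) auto
  also have "\<dots> = W powr (p - 2) * (\<Sum>i\<in>S. (w i)\<^sup>2 * y i powr p)"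
    using W y by (simp add: square_powr_half powr_diff sum_divide_distrib[symmetric] powr_numeral)
  finally show ?thesis by (simp add: W_def)
qed

lemma integral_L2_set_powr_le:
  fixes h :: "'i \<Rightarrow> real \<Rightarrow> complex"
  assumes p: "2 \<le> p" and S: "finite S" and h: "\<And>i. i \<in> S \<Longrightarrow> memLp p (h i)"
    and M: "\<And>i. i \<in> S \<Longrightarrow> (\<integral>x. cmod (h i x) powr p \<partial>lebesgue) \<le> M"
  shows "integrable lebesgue (\<lambda>x. L2_set (\<lambda>i. w i * cmod (h i x)) S powr p)"
    and "(\<integral>x. L2_set (\<lambda>i. w i * cmod (h i x)) S powr p \<partial>lebesgue) \<le> L2_set w S powr p * M"
proof -
  define SF where "SF x = L2_set (\<lambda>i. w i * cmod (h i x)) S powr p" for x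
  define R where "R x = L2_set w S powr (p - 2) * (\<Sum>i\<in>S. (w i)\<^sup>2 * cmod (h i x) powr p)" for x
  have "L2_set (\<lambda>i. w i * cmod (h i x)) S = L2_set (\<lambda>i. cmod (complex_of_real (w i) * h i x)) S" for x
    unfolding L2_set_def by (simp add: norm_mult power_mult_distrib)
  then show SF_int: "integrable lebesgue SF"
    unfolding SF_def using Lp_Khintchine(1)[OF p S, of "\<lambda>i x. complex_of_real (w i) * h i x"] h
    by (simp add: memLp_mult_left)
  have R_int: "integrable lebesgue R"
    unfolding R_def using h by (auto simp: memLp_def)
  have "(\<integral>x. SF x \<partial>lebesgue) \<le> (\<integral>x. R x \<partial>lebesgue)"
    unfolding SF_def R_def using p S by (intro integral_mono SF_int[unfolded SF_def] R_int[unfolded R_def] L2_set_mult_powr_le) auto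
  also have "\<dots> \<le> L2_set w S powr (p - 2) * (\<Sum>i\<in>S. (w i)\<^sup>2 * M)"
    unfolding R_def using h M by (auto simp: memLp_def integral_sum intro!: mult_left_mono sum_mono)
  also have "\<dots> = L2_set w S powr p * M"
    by (cases "L2_set w S = 0")
      (simp_all add: sum_distrib_right[symmetric] L2_set_def powr_diff powr_half_sqrt[symmetric] powr_powr
        sum_nonneg powr_numeral)
  finally show "(\<integral>x. SF x \<partial>lebesgue) \<le> L2_set w S powr p * M" .
qed

lemma integral_translate_diff_le:
  fixes g :: "real \<Rightarrow> complex"
  assumes "0 < p" "0 \<le> r" and close: "\<And>t. 0 < t \<Longrightarrow> t < \<delta> \<Longrightarrow> Lp_norm p (\<lambda>x. transl t g x - g x) \<le> r"
    and "t\<^sub>0 \<le> t" "t < t\<^sub>0 + \<delta>"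
  shows "(\<integral>x. cmod (g (x - t) - g (x - t\<^sub>0)) powr p \<partial>lebesgue) \<le> r powr p"
proof -
  have "(\<integral>x. cmod (g (x - t) - g (x - t\<^sub>0)) powr p \<partial>lebesgue)
      = (\<integral>x. cmod (g (x - t\<^sub>0 - (t - t\<^sub>0)) - g (x - t\<^sub>0)) powr p \<partial>lebesgue)"
    by (simp add: algebra_simps)
  also have "\<dots> = (\<integral>x. cmod (g (x - (t - t\<^sub>0)) - g x) powr p \<partial>lebesgue)"
    using lebesgue_integral_translate[of "\<lambda>x. cmod (g (x - (t - t\<^sub>0)) - g x) powr p" t\<^sub>0] by simp
  also have "\<dots> \<le> r powr p"
  proof (cases "t = t\<^sub>0")
    case False
    then have "Lp_norm p (\<lambda>x. transl (t - t\<^sub>0) g x - g x) \<le> r"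
      using assms by (intro close) auto
    then show ?thesis
      using assms(1) by (simp add: Lp_norm_powr[symmetric] transl_def powr_mono2 Lp_norm_nonneg)
  qed (use assms in simp)
  finally show ?thesis .
qed

lemma L2_set_mult_norm_le:
  fixes u :: "'i \<Rightarrow> 'a::real_normed_vector"
  assumes "\<And>i. 0 \<le> w i"
  shows "L2_set w S * norm z \<le> L2_set (\<lambda>i. w i * norm (u i)) S + L2_set (\<lambda>i. w i * norm (u i - z)) S"
proof -
  have "L2_set w S * norm z = L2_set (\<lambda>i. w i * norm z) S"
    by (simp add: L2_set_left_distrib)
  also have "\<dots> \<le> L2_set (\<lambda>i. w i * norm (u i) + w i * norm (u i - z)) S"
    using assms norm_triangle_ineq4[of "u i" "u i - z" for i]
    by (intro L2_set_mono) (auto simp flip: distrib_left intro!: mult_left_mono)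
  also have "\<dots> \<le> L2_set (\<lambda>i. w i * norm (u i)) S + L2_set (\<lambda>i. w i * norm (u i - z)) S"
    by (rule L2_set_triangle_ineq)
  finally show ?thesis .
qed

text \<open>Pointwise, \<open>W \<bar>g (x - t\<^sub>0)\<bar>\<close> is at most the square function of the translates plus that of
  their differences from \<open>g (x - t\<^sub>0)\<close>, and the latter has \<open>L\<^sup>p\<close> norm at most \<open>W / 2\<close>.\<close>

lemma integral_L2_set_translates_ge:
  fixes g :: "real \<Rightarrow> complex"
  assumes p: "2 \<le> p" and S: "finite S" and w: "\<And>i. 0 \<le> w i"
    and g: "memLp p g" "(\<integral>x. cmod (g x) powr p \<partial>lebesgue) = 1"
    and close: "\<And>i. i \<in> S \<Longrightarrow> (\<integral>x. cmod (g (x - t i) - g (x - t\<^sub>0)) powr p \<partial>lebesgue) \<le> (1/2) powr p"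
  shows "L2_set w S powr p / 2 powr p \<le> (\<integral>x. L2_set (\<lambda>i. w i * cmod (g (x - t i))) S powr p \<partial>lebesgue)"
proof -
  define W where "W = L2_set w S"
  define G where "G x = L2_set (\<lambda>i. w i * cmod (g (x - t i))) S" for x
  define D where "D x = L2_set (\<lambda>i. w i * cmod (g (x - t i) - g (x - t\<^sub>0))) S" for x
  have g_translate: "memLp p (\<lambda>x. g (x - s))" "(\<integral>x. cmod (g (x - s)) powr p \<partial>lebesgue) = 1" for s
    using g memLp_translate lebesgue_integral_translate[of "\<lambda>x. cmod (g x) powr p"] by auto
  have G: "integrable lebesgue (\<lambda>x. G x powr p)"
    unfolding G_def using g_translate p S by (intro integral_L2_set_powr_le(1)) auto
  have D: "integrable lebesgue (\<lambda>x. D x powr p)" "(\<integral>x. D x powr p \<partial>lebesgue) \<le> W powr p * (1/2) powr p"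
    unfolding D_def W_def
    using integral_L2_set_powr_le[OF p S, of "\<lambda>i x. g (x - t i) - g (x - t\<^sub>0)" "(1/2) powr p" w]
      g_translate p close by (simp_all add: memLp_diff)
  have "(W * cmod (g (x - t\<^sub>0))) powr p \<le> 2 powr (p - 1) * (G x powr p + D x powr p)" for x
  proof -
    have "(W * cmod (g (x - t\<^sub>0))) powr p \<le> (G x + D x) powr p"
      unfolding G_def D_def W_def using p w by (intro powr_mono2 L2_set_mult_norm_le) auto
    also have "\<dots> \<le> 2 powr (p - 1) * (G x powr p + D x powr p)"
      using p by (intro add_powr_le_two_powr) (auto simp: G_def D_def)
    finally show ?thesis .
  qed
  moreover have "integrable lebesgue (\<lambda>x. (W * cmod (g (x - t\<^sub>0))) powr p)"
    using g_translate(1)[of t\<^sub>0] by (simp add: memLp_def powr_mult W_def)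
  ultimately have "(\<integral>x. (W * cmod (g (x - t\<^sub>0))) powr p \<partial>lebesgue)
      \<le> (\<integral>x. 2 powr (p - 1) * (G x powr p + D x powr p) \<partial>lebesgue)"
    using G D(1) by (intro integral_mono) auto
  also have "\<dots> = 2 powr (p - 1) * ((\<integral>x. G x powr p \<partial>lebesgue) + (\<integral>x. D x powr p \<partial>lebesgue))"
    using G D(1) by simp
  finally have "W powr p \<le> 2 powr (p - 1) * ((\<integral>x. G x powr p \<partial>lebesgue) + (\<integral>x. D x powr p \<partial>lebesgue))"
    using g_translate(2)[of t\<^sub>0] by (simp add: powr_mult W_def)
  moreover have "2 powr (p - 1) * (\<integral>x. D x powr p \<partial>lebesgue) \<le> W powr p / 2"
  proof -
    have "2 powr (p - 1) * (\<integral>x. D x powr p \<partial>lebesgue) \<le> 2 powr (p - 1) * (W powr p * (1/2) powr p)"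
      using D(2) by (rule mult_left_mono) simp
    also have "\<dots> = W powr p * (2 powr (p - 1) * (1/2) powr p)"
      by (simp only: mult.left_commute)
    also have "2 powr (p - 1) * (1/2) powr p = (1/2 :: real)"
      by (simp add: powr_diff powr_divide)
    finally show ?thesis by simp
  qed
  ultimately have "W powr p \<le> (2 * 2 powr (p - 1)) * (\<integral>x. G x powr p \<partial>lebesgue)"
    by (simp add: distrib_left)
  also have "2 * 2 powr (p - 1) = (2::real) powr p"
    by (simp add: powr_diff)
  finally show ?thesis
    unfolding G_def W_def by (simp add: pos_divide_le_eq mult.commute)
qed

section \<open>Unconditional Gabor systems\<close>

lemma K_unconditional_basic_memLp: "K_unconditional_basic p K u I \<Longrightarrow> i \<in> I \<Longrightarrow> memLp p (u i)"
  by (simp add: K_unconditional_basic_def basic_sequence_def)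

lemma K_unconditional_signed_sum_le:
  assumes "K_unconditional_basic p K u I" "finite F" "F \<subseteq> I" "e \<in> sign_vectors F"
  shows "Lp_norm p (\<lambda>x. signed_sum F (\<lambda>i. a i * u i x) e) \<le> K * Lp_norm p (\<lambda>x. \<Sum>i\<in>F. a i * u i x)"
proof -
  define \<theta> where "\<theta> i = (if i \<in> F then complex_of_real (e i) else 0)" for i
  have "cmod (\<theta> i) \<le> 1" for i
    using sign_vector_values[OF assms(4), of i] by (cases "i \<in> F") (auto simp: \<theta>_def)
  then have "Lp_norm p (\<lambda>x. \<Sum>i\<in>F. \<theta> i * a i * u i x) \<le> K * Lp_norm p (\<lambda>x. \<Sum>i\<in>F. a i * u i x)"
    using assms(1-3) unfolding K_unconditional_basic_def by blast
  moreover have "signed_sum F (\<lambda>i. a i * u i x) e = (\<Sum>i\<in>F. \<theta> i * a i * u i x)" for x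
    unfolding signed_sum_def \<theta>_def scaleR_conv_of_real by (intro sum.cong) (auto simp: mult.assoc)
  ultimately show ?thesis by simp
qed

lemma K_unconditional_le_signed_sum:
  assumes "K_unconditional_basic p K u I" "finite F" "F \<subseteq> I" "e \<in> sign_vectors F"
  shows "Lp_norm p (\<lambda>x. \<Sum>i\<in>F. a i * u i x) \<le> K * Lp_norm p (\<lambda>x. signed_sum F (\<lambda>i. a i * u i x) e)"
proof -
  \<comment> \<open>flip the signs of the coefficients and use \<open>e\<^sub>i\<^sup>2 = 1\<close>\<close>
  define b where "b i = complex_of_real (e i) * a i" for i
  have "complex_of_real (e i) * complex_of_real (e i) = 1" if "i \<in> F" for i
    using sign_vector_values[OF assms(4) that] by (auto simp flip: of_real_mult)
  then have "signed_sum F (\<lambda>i. b i * u i x) e = (\<Sum>i\<in>F. a i * u i x)" for x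
    unfolding signed_sum_def b_def scaleR_conv_of_real by (intro sum.cong) (auto simp: mult.assoc[symmetric])
  moreover have "(\<Sum>i\<in>F. b i * u i x) = signed_sum F (\<lambda>i. a i * u i x) e" for x
    unfolding signed_sum_def b_def scaleR_conv_of_real by (simp add: mult.assoc)
  ultimately show ?thesis
    using K_unconditional_signed_sum_le[OF assms, of b] by simp
qed

lemma K_unconditional_sign_average_bounds:
  assumes "K_unconditional_basic p K u I" "finite F" "F \<subseteq> I" "0 < p"
  shows "Lp_norm p (\<lambda>x. \<Sum>i\<in>F. a i * u i x) powr p
           \<le> max K 1 powr p * sign_average F (\<lambda>e. Lp_norm p (\<lambda>x. signed_sum F (\<lambda>i. a i * u i x) e) powr p)"
    and "sign_average F (\<lambda>e. Lp_norm p (\<lambda>x. signed_sum F (\<lambda>i. a i * u i x) e) powr p)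
           \<le> (max K 1 * Lp_norm p (\<lambda>x. \<Sum>i\<in>F. a i * u i x)) powr p"
proof -
  define N where "N = Lp_norm p (\<lambda>x. \<Sum>i\<in>F. a i * u i x)"
  define N\<^sub>e where "N\<^sub>e e = Lp_norm p (\<lambda>x. signed_sum F (\<lambda>i. a i * u i x) e)" for e
  have "N \<le> max K 1 * N\<^sub>e e" "N\<^sub>e e \<le> max K 1 * N" if "e \<in> sign_vectors F" for e
    using K_unconditional_le_signed_sum[OF assms(1-3) that, of a]
      K_unconditional_signed_sum_le[OF assms(1-3) that, of a] Lp_norm_nonneg[of p]
    unfolding N_def N\<^sub>e_def by (smt (verit) mult_right_mono max.cobounded1)+
  then have "N powr p \<le> max K 1 powr p * N\<^sub>e e powr p" "N\<^sub>e e powr p \<le> (max K 1 * N) powr p"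
    if "e \<in> sign_vectors F" for e
    using that assms(4) by (auto simp flip: powr_mult intro!: powr_mono2 simp: N_def N\<^sub>e_def Lp_norm_nonneg)
  then show "N powr p \<le> max K 1 powr p * sign_average F (\<lambda>e. N\<^sub>e e powr p)"
    and "sign_average F (\<lambda>e. N\<^sub>e e powr p) \<le> (max K 1 * N) powr p"
    using sign_average_mono[of F "\<lambda>_. N powr p" "\<lambda>e. max K 1 powr p * N\<^sub>e e powr p"]
      sign_average_mono[of F "\<lambda>e. N\<^sub>e e powr p" "\<lambda>_. (max K 1 * N) powr p"]
    by (simp_all only: sign_average_const[OF assms(2)] sign_average_mult_left)
qed

lemma norm_gabor_atom: "cmod (gabor_atom g ts x) = cmod (g (x - fst ts))"
  unfolding gabor_atom_def modul_def transl_def by (simp add: norm_mult norm_exp_eq_Re)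

lemma integral_window_square_function_bounds:
  fixes g :: "real \<Rightarrow> complex" and w :: "'i \<Rightarrow> real" and t :: "'i \<Rightarrow> real"
  assumes p: "2 \<le> p" and g: "memLp p g" "Lp_norm p g = 1"
    and close: "\<And>\<tau>. 0 < \<tau> \<Longrightarrow> \<tau> < \<delta> \<Longrightarrow> Lp_norm p (\<lambda>x. transl \<tau> g x - g x) \<le> 1 / 2"
    and S: "finite S" "\<And>i. i \<in> S \<Longrightarrow> t\<^sub>0 \<le> t i \<and> t i < t\<^sub>0 + \<delta>" and w: "\<And>i. 0 \<le> w i"
  shows "L2_set w S powr p / 2 powr p \<le> (\<integral>x. L2_set (\<lambda>i. w i * cmod (g (x - t i))) S powr p \<partial>lebesgue)"
    and "(\<integral>x. L2_set (\<lambda>i. w i * cmod (g (x - t i))) S powr p \<partial>lebesgue) \<le> L2_set w S powr p"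
proof -
  have p0: "0 < p" using p by simp
  have g1: "(\<integral>x. cmod (g x) powr p \<partial>lebesgue) = 1"
    using g(2) Lp_norm_powr[OF p0, of g] by simp
  have "(\<integral>x. cmod (g (x - t i) - g (x - t\<^sub>0)) powr p \<partial>lebesgue) \<le> (1/2) powr p" if "i \<in> S" for i
    using S(2)[OF that] close p0 by (intro integral_translate_diff_le[where \<delta> = \<delta>]) auto
  then show "L2_set w S powr p / 2 powr p \<le> (\<integral>x. L2_set (\<lambda>i. w i * cmod (g (x - t i))) S powr p \<partial>lebesgue)"
    by (rule integral_L2_set_translates_ge[OF p S(1) w g(1) g1])
  have "memLp p (\<lambda>x. g (x - s))" "(\<integral>x. cmod (g (x - s)) powr p \<partial>lebesgue) = 1" for s
    using g(1) g1 memLp_translate lebesgue_integral_translate[of "\<lambda>x. cmod (g x) powr p"] by auto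
  then show "(\<integral>x. L2_set (\<lambda>i. w i * cmod (g (x - t i))) S powr p \<partial>lebesgue) \<le> L2_set w S powr p"
    using integral_L2_set_powr_le(2)[OF p S(1), of "\<lambda>i x. g (x - t i)" 1 w] by simp
qed

lemma gabor_window_bounds:
  fixes g :: "real \<Rightarrow> complex" and a :: "real \<times> real \<Rightarrow> complex"
  assumes p: "2 \<le> p" and g: "memLp p g" "Lp_norm p g = 1"
    and unc: "K_unconditional_basic p K (gabor_atom g) \<Lambda>"
    and close: "\<And>t. 0 < t \<Longrightarrow> t < \<delta> \<Longrightarrow> Lp_norm p (\<lambda>x. transl t g x - g x) \<le> 1 / 2"
    and S: "finite S" "S \<subseteq> {ts \<in> \<Lambda>. t\<^sub>0 \<le> fst ts \<and> fst ts < t\<^sub>0 + \<delta>}"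
  shows "L2_set (\<lambda>ts. cmod (a ts)) S / (2 * max K 1) \<le> Lp_norm p (\<lambda>x. \<Sum>ts\<in>S. a ts * gabor_atom g ts x)"
    and "Lp_norm p (\<lambda>x. \<Sum>ts\<in>S. a ts * gabor_atom g ts x)
           \<le> max K 1 * khintchine_const p powr (1 / p) * L2_set (\<lambda>ts. cmod (a ts)) S"
proof -
  have p0: "0 < p" using p by simp
  have S\<Lambda>: "S \<subseteq> \<Lambda>" using S(2) by blast
  define M where "M = max K 1"
  define A where "A = L2_set (\<lambda>ts. cmod (a ts)) S"
  define N where "N = Lp_norm p (\<lambda>x. \<Sum>ts\<in>S. a ts * gabor_atom g ts x)"
  define E where "E = sign_average S (\<lambda>e. Lp_norm p (\<lambda>x. signed_sum S (\<lambda>ts. a ts * gabor_atom g ts x) e) powr p)"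
  define Q where "Q = (\<integral>x. L2_set (\<lambda>ts. cmod (a ts) * cmod (g (x - fst ts))) S powr p \<partial>lebesgue)"
  have M: "0 < M" by (simp add: M_def less_max_iff_disj)
  have "L2_set (\<lambda>ts. cmod (a ts * gabor_atom g ts x)) S = L2_set (\<lambda>ts. cmod (a ts) * cmod (g (x - fst ts))) S" for x
    by (simp add: norm_mult norm_gabor_atom)
  then have Khintchine: "Q \<le> E" "E \<le> khintchine_const p * Q"
    using Lp_Khintchine(2,3)[OF p S(1), of "\<lambda>ts x. a ts * gabor_atom g ts x"] unc S\<Lambda>
    by (auto simp: Q_def E_def intro: memLp_mult_left K_unconditional_basic_memLp)
  have "\<And>ts. ts \<in> S \<Longrightarrow> t\<^sub>0 \<le> fst ts \<and> fst ts < t\<^sub>0 + \<delta>" "\<And>ts. 0 \<le> cmod (a ts)"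
    using S(2) by auto
  note window = p g close S(1) this
  have square_function_lower: "A powr p / 2 powr p \<le> Q"
    unfolding Q_def A_def using window by (rule integral_window_square_function_bounds(1))
  have square_function_upper: "Q \<le> A powr p"
    unfolding Q_def A_def using window by (rule integral_window_square_function_bounds(2))
  have unconditional: "N powr p \<le> M powr p * E" "E \<le> (M * N) powr p"
    using K_unconditional_sign_average_bounds[OF unc S(1) S\<Lambda> p0, of a] unfolding M_def N_def E_def by simp_all
  have "N powr p \<le> M powr p * (khintchine_const p * A powr p)"
    using unconditional(1) Khintchine(2) square_function_upper khintchine_const_pos[of p] M
    by (smt (verit) mult_left_mono powr_ge_zero)
  also have "\<dots> = (M * khintchine_const p powr (1 / p) * A) powr p"
    using M khintchine_const_pos[of p] p0 by (simp add: powr_mult powr_powr A_def)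
  finally show "N \<le> M * khintchine_const p powr (1 / p) * A"
    using p0 by (rule powr_le_imp_le_base) (use M khintchine_const_pos[of p] in \<open>auto simp: N_def A_def Lp_norm_nonneg\<close>)
  have "(A / 2) powr p \<le> (M * N) powr p"
    using square_function_lower Khintchine(1) unconditional(2) by (simp add: powr_divide A_def)
  then have "A / 2 \<le> M * N"
    using p0 by (rule powr_le_imp_le_base) (use M in \<open>auto simp: N_def A_def Lp_norm_nonneg\<close>)
  then show "A / (2 * M) \<le> N"
    using M by (simp add: divide_le_eq algebra_simps)
qed

theorem mainTheorem10:
  fixes p K :: real
  assumes "2 \<le> p"
  shows "\<exists>c C. c > 0 \<and> C > 0 \<and>
    (\<forall>(g :: real \<Rightarrow> complex) (\<Lambda> :: (real \<times> real) set) (\<delta> :: real).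
       memLp p g \<and> Lp_norm p g = 1 \<and> countable \<Lambda> \<and>
       K_unconditional_basic p K (gabor_atom g) \<Lambda> \<and>
       \<delta> > 0 \<and> (\<forall>t. 0 < t \<and> t < \<delta> \<longrightarrow> Lp_norm p (\<lambda>x. transl t g x - g x) \<le> 1 / 2)
       \<longrightarrow>
       (\<forall>(k :: int) (a :: real \<times> real \<Rightarrow> complex).
          let \<Lambda>k = {ts \<in> \<Lambda>. of_int k * \<delta> \<le> fst ts \<and> fst ts < (of_int k + 1) * \<delta>};
              S = {ts \<in> \<Lambda>k. a ts \<noteq> 0} in
          finite S \<longrightarrow>
            c * sqrt (\<Sum>ts\<in>S. (cmod (a ts))\<^sup>2)
              \<le> Lp_norm p (\<lambda>x. \<Sum>ts\<in>S. a ts * gabor_atom g ts x) \<and>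
            Lp_norm p (\<lambda>x. \<Sum>ts\<in>S. a ts * gabor_atom g ts x)
              \<le> C * sqrt (\<Sum>ts\<in>S. (cmod (a ts))\<^sup>2)))"
proof (rule exI[of _ "1 / (2 * max K 1)"], rule exI[of _ "max K 1 * khintchine_const p powr (1 / p)"],
    intro conjI allI impI, goal_cases)
  case 1
  then show ?case by (simp add: less_max_iff_disj)
next
  case 2
  then show ?case using khintchine_const_pos[of p] by (simp add: less_max_iff_disj)
next
  case (3 g \<Lambda> \<delta> k a)
  show ?case
    unfolding Let_def L2_set_def[symmetric] times_divide_eq_left mult_1
    by (intro impI conjI gabor_window_bounds) (use assms 3 in \<open>auto simp: algebra_simps\<close>)
qed

end
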